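(* Let $m\ge 1$. In the checker game on $2m+1$ positions, the configuration $b^mOw^m$ can be transformed, by a sequence of exactly $\frac{m(m+1)}{2}$ legal moves, into one of the configurations $O(bw)^m$ or $(bw)^mO$.
   Context: Positions $1,\dots,2m+1$ in a row; a configuration is a word over $\{b,w,O\}$ with exactly one $O$, where $b$ denotes a black checker, $w$ a white checker and $O$ the vacancy; $(bw)^m$ denotes $bw$ repeated $m$ times. A legal move is either a slide (a checker adjacent to the vacancy moves into it) or a jump (a checker at distance two from the vacancy jumps over the checker between them into the vacancy). *)

theory Defs
  imports Main
begin

datatype cell = Bk | Wh | Vac

text \<open>A configuration is a list of cells (positions 1..2m+1 are list indices 0..2m).\<close>

definition legal_move :: "cell list \<Rightarrow> cell list \<Rightarrow> bool" where
  "legal_move c c' \<longleftrightarrow>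
     (\<exists>i j. i < length c \<and> j < length c \<and> c ! j = Vac \<and> c ! i \<noteq> Vac \<and>
        (i + 1 = j \<or> j + 1 = i \<or>
         (i + 2 = j \<and> c ! (i + 1) \<noteq> Vac) \<or> (j + 2 = i \<and> c ! (j + 1) \<noteq> Vac)) \<and>
        c' = c[j := c ! i, i := Vac])"

definition bw_pow :: "nat \<Rightarrow> cell list" where
  "bw_pow m = concat (replicate m [Bk, Wh])"

end

theory Submission
  imports Defs
begin

text \<open>Let S(k) be b^(m-k) (bw)^k O w^(m-k) for even k and b^(m-k) O (bw)^k w^(m-k)
  for odd k. From S(k) the vacancy jumps k times across the alternating block, turning
  it into (wb)^k, and one slide then pulls in the adjacent checker from the far side;
  the block becomes (bw)^(k+1) with the vacancy on its other side, i.e. S(k+1) is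
  reached in k + 1 moves. Hence S(m), which is (bw)^m O or O (bw)^m, is reached from
  S(0) = b^m O w^m in 1 + 2 + ... + m moves.\<close>

definition wb_pow :: "nat \<Rightarrow> cell list" where
  "wb_pow n = concat (replicate n [Wh, Bk])"

lemma bw_pow_0 [simp]: "bw_pow 0 = []"
  by (simp add: bw_pow_def)

lemma wb_pow_0 [simp]: "wb_pow 0 = []"
  by (simp add: wb_pow_def)

lemma bw_pow_Suc: "bw_pow (Suc n) = Bk # Wh # bw_pow n"
  by (simp add: bw_pow_def)

lemma wb_pow_Suc: "wb_pow (Suc n) = Wh # Bk # wb_pow n"
  by (simp add: wb_pow_def)

lemma bw_pow_Suc_snoc: "bw_pow (Suc n) = bw_pow n @ [Bk, Wh]"
  by (induction n) (simp_all add: bw_pow_Suc)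

lemma wb_pow_Suc_snoc: "wb_pow (Suc n) = wb_pow n @ [Wh, Bk]"
  by (induction n) (simp_all add: wb_pow_Suc)

lemma wb_pow_snoc_Wh: "wb_pow n @ [Wh] = Wh # bw_pow n"
  by (induction n) (simp_all add: bw_pow_Suc wb_pow_Suc)

lemma bw_pow_Suc_wb_pow: "bw_pow (Suc n) = Bk # wb_pow n @ [Wh]"
  by (simp add: bw_pow_Suc wb_pow_snoc_Wh)

lemma vacancy_slide_right: "legal_move (xs @ Vac # Wh # ys) (xs @ Wh # Vac # ys)"
  unfolding legal_move_def
  by (intro exI[of _ "length xs + 1"] exI[of _ "length xs"])
     (simp add: nth_append list_update_append)

lemma vacancy_slide_left: "legal_move (xs @ Bk # Vac # ys) (xs @ Vac # Bk # ys)"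
  unfolding legal_move_def
  by (intro exI[of _ "length xs"] exI[of _ "length xs + 1"])
     (simp add: nth_append list_update_append)

lemma vacancy_jump_right: "legal_move (xs @ Vac # Bk # Wh # ys) (xs @ Wh # Bk # Vac # ys)"
  unfolding legal_move_def
  by (intro exI[of _ "length xs + 2"] exI[of _ "length xs"])
     (simp add: nth_append list_update_append)

lemma vacancy_jump_left: "legal_move (xs @ Bk # Wh # Vac # ys) (xs @ Vac # Wh # Bk # ys)"
  unfolding legal_move_def
  by (intro exI[of _ "length xs"] exI[of _ "length xs + 2"])
     (simp add: nth_append list_update_append)

lemma vacancy_jumps_right:
  "(legal_move ^^ n) (xs @ Vac # bw_pow n @ ys) (xs @ wb_pow n @ Vac # ys)"
proof (induction n arbitrary: xs)
  case 0
  show ?case by simp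
next
  case (Suc n)
  have "(legal_move ^^ n) ((xs @ [Wh, Bk]) @ Vac # bw_pow n @ ys)
                          ((xs @ [Wh, Bk]) @ wb_pow n @ Vac # ys)"
    by (rule Suc.IH)
  with vacancy_jump_right[of xs "bw_pow n @ ys"] show ?case
    by (intro relpowp_Suc_I2[of _ _ "xs @ Wh # Bk # Vac # bw_pow n @ ys"])
       (simp_all add: bw_pow_Suc wb_pow_Suc)
qed

lemma vacancy_jumps_left:
  "(legal_move ^^ n) (xs @ bw_pow n @ Vac # ys) (xs @ Vac # wb_pow n @ ys)"
proof (induction n arbitrary: ys)
  case 0
  show ?case by simp
next
  case (Suc n)
  have "(legal_move ^^ n) (xs @ bw_pow n @ Vac # Wh # Bk # ys)
                          (xs @ Vac # wb_pow n @ Wh # Bk # ys)"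
    by (rule Suc.IH)
  with vacancy_jump_left[of "xs @ bw_pow n" ys] show ?case
    by (intro relpowp_Suc_I2[of _ _ "xs @ bw_pow n @ Vac # Wh # Bk # ys"])
       (simp_all add: bw_pow_Suc_snoc wb_pow_Suc_snoc)
qed

definition stage :: "nat \<Rightarrow> nat \<Rightarrow> cell list" where
  "stage m k =
     (if even k then replicate (m - k) Bk @ bw_pow k @ Vac # replicate (m - k) Wh
      else replicate (m - k) Bk @ Vac # bw_pow k @ replicate (m - k) Wh)"

lemma stage_Suc:
  assumes "k < m"
  shows "(legal_move ^^ Suc k) (stage m k) (stage m (Suc k))"
proof -
  obtain r where r: "m - k = Suc r" "m - Suc k = r"
    using assms by (metis Suc_diff_Suc)
  show ?thesis
  proof (cases "even k")
    case True
    have "(legal_move ^^ k) (stage m k)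
            (Bk # replicate r Bk @ Vac # wb_pow k @ replicate (m - k) Wh)"
      using True vacancy_jumps_left[of k "replicate (m - k) Bk" "replicate (m - k) Wh"]
      by (simp add: stage_def r)
    moreover have "legal_move (Bk # replicate r Bk @ Vac # wb_pow k @ replicate (m - k) Wh)
                     (stage m (Suc k))"
      using True vacancy_slide_left[of "replicate r Bk" "wb_pow k @ replicate (m - k) Wh"]
      by (simp add: stage_def r bw_pow_Suc_wb_pow replicate_app_Cons_same)
    ultimately show ?thesis
      by (rule relpowp_Suc_I)
  next
    case False
    have "(legal_move ^^ k) (stage m k)
            (replicate (m - k) Bk @ wb_pow k @ Vac # Wh # replicate r Wh)"
      using False vacancy_jumps_right[of k "replicate (m - k) Bk" "replicate (m - k) Wh"]
      by (simp add: stage_def r)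
    moreover have "legal_move (replicate (m - k) Bk @ wb_pow k @ Vac # Wh # replicate r Wh)
                     (stage m (Suc k))"
      using False vacancy_slide_right[of "replicate (m - k) Bk @ wb_pow k" "replicate r Wh"]
      by (simp add: stage_def r bw_pow_Suc_wb_pow replicate_app_Cons_same)
    ultimately show ?thesis
      by (rule relpowp_Suc_I)
  qed
qed

lemma stage_reachable:
  assumes "k \<le> m"
  shows "(legal_move ^^ (k * (k + 1) div 2)) (stage m 0) (stage m k)"
  using assms
proof (induction k)
  case 0
  show ?case by simp
next
  case (Suc k)
  have triangle: "Suc k * (Suc k + 1) div 2 = k * (k + 1) div 2 + Suc k"
    by simp
  from Suc have "(legal_move ^^ (k * (k + 1) div 2)) (stage m 0) (stage m k)"
    by simp
  moreover from Suc.prems have "(legal_move ^^ Suc k) (stage m k) (stage m (Suc k))"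
    by (intro stage_Suc) simp
  ultimately show ?case
    unfolding triangle relpowp_add by blast
qed

theorem lemma2:
  fixes m :: nat
  assumes "m \<ge> 1"
  shows "(legal_move ^^ (m * (m + 1) div 2))
           (replicate m Bk @ [Vac] @ replicate m Wh) (Vac # bw_pow m)
       \<or> (legal_move ^^ (m * (m + 1) div 2))
           (replicate m Bk @ [Vac] @ replicate m Wh) (bw_pow m @ [Vac])"
proof -
  have "stage m 0 = replicate m Bk @ [Vac] @ replicate m Wh"
    by (simp add: stage_def)
  moreover have "stage m m = (if even m then bw_pow m @ [Vac] else Vac # bw_pow m)"
    by (simp add: stage_def)
  ultimately show ?thesis
    using stage_reachable[of m m] by (auto split: if_splits)
qed

end
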